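(* Let $p,q$ be distinct positive integers, $n\ge1$, and $s$ a nonempty finite sequence of elements of $\{p,q\}$. Every orbit (cycle) of the permutation $x\mapsto A^{p,q}_n(x,s)$ of $\{p,q\}^n$ has length a power of $2$.
   Context: Let $p,q$ be distinct positive integers. Define $\mathrm{Opp}(p)=q$, $\mathrm{Opp}(q)=p$. For $x\in\{p,q\}$ and a finite sequence $s=(s_1,\dots,s_m)$ of positive integers, $RLD^{p,q}(x,s)$ is the sequence over $\{p,q\}$ consisting of $s_1$ copies of $x$, then $s_2$ copies of $\mathrm{Opp}(x)$, then $s_3$ copies of $x$, and so on alternately. For $n\ge1$ and $x=(x_1,\dots,x_n)\in\{p,q\}^n$: $RLD^{p,q}_1(x_1,s)=RLD^{p,q}(x_1,s)$ and $RLD^{p,q}_n(x_{1:n},s)=RLD^{p,q}(x_n, RLD^{p,q}_{n-1}(x_{1:n-1},s))$. For a nonempty sequence $t$ over $\{p,q\}$, $\mathrm{OppEnd}(t)=\mathrm{Opp}(\text{last entry of } t)$. The automaton $A^{p,q}_n$ has state set $\{p,q\}^n$; for a state $x$ and a nonempty finite sequence $s$ over $\{p,q\}$, $A^{p,q}_n(x,s)$ is the state whose $i$-th coordinate is $\mathrm{OppEnd}(RLD^{p,q}_i(x_{1:i},s))$, $i=1,\dots,n$. The map $x\mapsto A^{p,q}_n(x,s)$ is a permutation of $\{p,q\}^n$. *)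

theory Defs
  imports Main
begin

definition opp :: "nat \<Rightarrow> nat \<Rightarrow> nat \<Rightarrow> nat" where
  "opp p q x = (if x = p then q else p)"

fun rld :: "nat \<Rightarrow> nat \<Rightarrow> nat \<Rightarrow> nat list \<Rightarrow> nat list" where
  "rld p q x [] = []"
| "rld p q x (k # ks) = replicate k x @ rld p q (opp p q x) ks"

text \<open>RLD_n^{p,q}(x_{1:n},s) = RLD(x_n, RLD_{n-1}(x_{1:n-1},s)), RLD_1(x_1,s) = RLD(x_1,s).\<close>
definition rldn :: "nat \<Rightarrow> nat \<Rightarrow> nat list \<Rightarrow> nat list \<Rightarrow> nat list" where
  "rldn p q xs s = foldl (\<lambda>t x. rld p q x t) s xs"

definition opp_end :: "nat \<Rightarrow> nat \<Rightarrow> nat list \<Rightarrow> nat" where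
  "opp_end p q t = opp p q (last t)"

definition automaton :: "nat \<Rightarrow> nat \<Rightarrow> nat \<Rightarrow> nat list \<Rightarrow> nat list \<Rightarrow> nat list" where
  "automaton p q n s x = map (\<lambda>i. opp_end p q (rldn p q (take i x) s)) [1..<n+1]"

definition states :: "nat \<Rightarrow> nat \<Rightarrow> nat \<Rightarrow> nat list set" where
  "states p q n = {x. length x = n \<and> set x \<subseteq> {p, q}}"

end

theory Submission
  imports Defs
begin

text \<open>The automaton is triangular: the first n coordinates of A_{n+1}(x, s) are
  A_n(x_{1:n}, s), and the last one is x_{n+1} or Opp(x_{n+1}), depending only on the parity
  of the length of RLD_n(x_{1:n}, s). Hence flipping the last coordinate commutes with
  A_{n+1}. If the orbit of x_{1:n} has length L, then after L steps x has returned either to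
  itself or to itself with the last coordinate flipped, so the orbit of x has length L or 2L;
  induction on n gives a power of two.\<close>

definition exact_period :: "('a \<Rightarrow> 'a) \<Rightarrow> 'a \<Rightarrow> nat \<Rightarrow> bool" where
  "exact_period f x L \<longleftrightarrow> (\<forall>k. (f ^^ k) x = x \<longleftrightarrow> L dvd k)"

lemma exact_period_funpow_self: "exact_period f x L \<Longrightarrow> (f ^^ L) x = x"
  by (simp add: exact_period_def)

lemma exact_period_minimal:
  "exact_period f x L \<Longrightarrow> 0 < k \<Longrightarrow> k < L \<Longrightarrow> (f ^^ k) x \<noteq> x"
  by (auto simp: exact_period_def dest: dvd_imp_le)

lemma funpow_mult_fixpoint: "(f ^^ L) x = x \<Longrightarrow> (f ^^ (L * j)) x = x"
  by (induction j) (simp_all add: funpow_add)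

lemma exact_period_lift:
  fixes f :: "'a \<Rightarrow> 'a" and g :: "'b \<Rightarrow> 'b"
  assumes period: "exact_period g (\<pi> x) L"
    and "x \<in> S" and closed: "\<And>y. y \<in> S \<Longrightarrow> f y \<in> S"
    and semiconj: "\<And>y. y \<in> S \<Longrightarrow> \<pi> (f y) = g (\<pi> y)"
    and comm: "\<And>y. y \<in> S \<Longrightarrow> \<sigma> (f y) = f (\<sigma> y)"
    and fibre: "\<And>y. y \<in> S \<Longrightarrow> \<pi> y = \<pi> x \<Longrightarrow> y = x \<or> y = \<sigma> x"
    and involution: "\<sigma> (\<sigma> x) = x" and no_fixpoint: "\<sigma> x \<noteq> x"
  shows "exact_period f x L \<or> exact_period f x (2 * L)"
proof -
  have orbit: "(f ^^ k) x \<in> S" for k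
    by (induction k) (simp_all add: \<open>x \<in> S\<close> closed)
  have proj: "\<pi> ((f ^^ k) x) = (g ^^ k) (\<pi> x)" for k
    by (induction k) (simp_all add: semiconj orbit)
  have flip: "(f ^^ k) (\<sigma> x) = \<sigma> ((f ^^ k) x)" for k
    by (induction k) (simp_all add: comm orbit)
  have return_dvd: "L dvd k" if "(f ^^ k) x = x" for k
  proof -
    have "(g ^^ k) (\<pi> x) = \<pi> x"
      using proj[of k] that by simp
    then show ?thesis
      using period by (simp add: exact_period_def)
  qed
  have "(f ^^ L) x = x \<or> (f ^^ L) x = \<sigma> x"
    using fibre[OF orbit[of L]] proj[of L] exact_period_funpow_self[OF period] by simp
  then show ?thesis
  proof
    assume "(f ^^ L) x = x"
    then have "(f ^^ k) x = x \<longleftrightarrow> L dvd k" for k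
      using return_dvd funpow_mult_fixpoint by (auto elim!: dvdE)
    then show ?thesis
      by (simp add: exact_period_def)
  next
    assume half: "(f ^^ L) x = \<sigma> x"
    have alternate: "(f ^^ (L * j)) x = (if even j then x else \<sigma> x)" for j
    proof (induction j)
      case (Suc j)
      have "(f ^^ (L * Suc j)) x = (f ^^ L) ((f ^^ (L * j)) x)"
        by (simp add: funpow_add)
      then show ?case
        using Suc.IH half flip[of L] involution by simp
    qed simp
    have "(f ^^ k) x = x \<longleftrightarrow> 2 * L dvd k" for k
    proof
      assume "(f ^^ k) x = x"
      moreover obtain j where "k = L * j"
        using return_dvd[OF \<open>(f ^^ k) x = x\<close>] by blast
      ultimately have "even j"
        using alternate[of j] no_fixpoint by (cases "even j") simp_all
      then show "2 * L dvd k"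
        using \<open>k = L * j\<close> by auto
    next
      assume "2 * L dvd k"
      then obtain i where "k = L * (2 * i)"
        by (metis dvdE mult.assoc mult.commute)
      then show "(f ^^ k) x = x"
        using alternate[of "2 * i"] by simp
    qed
    then show ?thesis
      by (simp add: exact_period_def)
  qed
qed

lemma opp_mem: "opp p q a \<in> {p, q}"
  by (simp add: opp_def)

lemma opp_opp: "p \<noteq> q \<Longrightarrow> a \<in> {p, q} \<Longrightarrow> opp p q (opp p q a) = a"
  by (auto simp: opp_def)

lemma opp_neq_self: "p \<noteq> q \<Longrightarrow> a \<in> {p, q} \<Longrightarrow> opp p q a \<noteq> a"
  by (auto simp: opp_def)

lemma set_rld_subset: "a \<in> {p, q} \<Longrightarrow> set (rld p q a t) \<subseteq> {p, q}"
  by (induction t arbitrary: a) (auto simp: opp_def)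

lemma rld_eq_Nil_iff: "rld p q a t = [] \<longleftrightarrow> (\<forall>k \<in> set t. k = 0)"
  by (induction t arbitrary: a) auto

lemma last_rld:
  assumes "p \<noteq> q" "a \<in> {p, q}" "t \<noteq> []" "\<forall>k \<in> set t. 0 < k"
  shows "last (rld p q a t) = (if odd (length t) then a else opp p q a)"
  using assms(2-)
proof (induction t arbitrary: a)
  case (Cons k ks)
  show ?case
  proof (cases "ks = []")
    case False
    then have "rld p q (opp p q a) ks \<noteq> []"
      using Cons.prems(3) by (auto simp: rld_eq_Nil_iff neq_Nil_conv)
    then show ?thesis
      using Cons.IH[OF opp_mem False] Cons.prems opp_opp[OF assms(1)] by simp
  qed (use Cons.prems in simp)
qed simp

lemma opp_end_rld:
  assumes "p \<noteq> q" "a \<in> {p, q}" "t \<noteq> []" "\<forall>k \<in> set t. 0 < k"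
  shows "opp_end p q (rld p q a t) = (if odd (length t) then opp p q a else a)"
  using last_rld[OF assms] opp_opp[OF assms(1,2)] by (simp add: opp_end_def)

lemma rldn_Nil [simp]: "rldn p q [] s = s"
  by (simp add: rldn_def)

lemma rldn_snoc [simp]: "rldn p q (u @ [a]) s = rld p q a (rldn p q u s)"
  by (simp add: rldn_def)

lemma set_rldn_subset:
  "set s \<subseteq> {p, q} \<Longrightarrow> set u \<subseteq> {p, q} \<Longrightarrow> set (rldn p q u s) \<subseteq> {p, q}"
  by (induction u rule: rev_induct) (simp_all add: set_rld_subset)

lemma automaton_snoc:
  "length u = n \<Longrightarrow>
     automaton p q (Suc n) s (u @ [a]) = automaton p q n s u @ [opp_end p q (rldn p q (u @ [a]) s)]"
  unfolding automaton_def by (auto intro!: map_cong)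

lemma automaton_in_states: "automaton p q n s x \<in> states p q n"
  by (auto simp: states_def automaton_def opp_end_def opp_def)

lemma snoc_in_states_Suc_iff [simp]:
  "u @ [a] \<in> states p q (Suc n) \<longleftrightarrow> u \<in> states p q n \<and> a \<in> {p, q}"
  by (auto simp: states_def)

lemma states_SucE:
  assumes "x \<in> states p q (Suc n)"
  obtains u a where "x = u @ [a]" "u \<in> states p q n" "a \<in> {p, q}"
proof -
  have "x \<noteq> []"
    using assms by (auto simp: states_def)
  then obtain u a where "x = u @ [a]"
    by (metis rev_exhaust)
  with assms that show ?thesis
    by simp
qed

lemma butlast_automaton:
  assumes "x \<in> states p q (Suc n)"
  shows "butlast (automaton p q (Suc n) s x) = automaton p q n s (butlast x)"
proof -
  obtain u a where "x = u @ [a]" "u \<in> states p q n"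
    using assms by (rule states_SucE)
  then show ?thesis
    by (simp add: automaton_snoc states_def)
qed

definition flip_last :: "nat \<Rightarrow> nat \<Rightarrow> nat list \<Rightarrow> nat list" where
  "flip_last p q x = butlast x @ [opp p q (last x)]"

lemma flip_last_snoc [simp]: "flip_last p q (u @ [a]) = u @ [opp p q a]"
  by (simp add: flip_last_def)

lemma states_Suc_same_butlast:
  assumes "p \<noteq> q" "x \<in> states p q (Suc n)" "y \<in> states p q (Suc n)" "butlast y = butlast x"
  shows "y = x \<or> y = flip_last p q x"
proof -
  obtain u a where "x = u @ [a]" "a \<in> {p, q}"
    using assms(2) by (rule states_SucE)
  moreover obtain v b where "y = v @ [b]" "b \<in> {p, q}"
    using assms(3) by (rule states_SucE)
  ultimately show ?thesis
    using assms(1,4) by (auto simp: opp_def)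
qed

lemma flip_last_flip_last: "p \<noteq> q \<Longrightarrow> x \<in> states p q (Suc n) \<Longrightarrow> flip_last p q (flip_last p q x) = x"
  by (erule states_SucE) (simp add: opp_opp)

lemma flip_last_neq_self: "p \<noteq> q \<Longrightarrow> x \<in> states p q (Suc n) \<Longrightarrow> flip_last p q x \<noteq> x"
  by (erule states_SucE) (simp add: opp_neq_self)

locale rld_automaton =
  fixes p q :: nat and s :: "nat list"
  assumes p_pos: "0 < p" and q_pos: "0 < q" and p_neq_q: "p \<noteq> q"
    and s_not_Nil: "s \<noteq> []" and set_s: "set s \<subseteq> {p, q}"
begin

lemma rldn_pos: "set u \<subseteq> {p, q} \<Longrightarrow> \<forall>k \<in> set (rldn p q u s). 0 < k"
  using set_rldn_subset[OF set_s] p_pos q_pos by fastforce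

lemma rldn_not_Nil: "set u \<subseteq> {p, q} \<Longrightarrow> rldn p q u s \<noteq> []"
proof (induction u rule: rev_induct)
  case (snoc a u)
  then have "rldn p q u s \<noteq> []" and "\<forall>k \<in> set (rldn p q u s). 0 < k"
    using rldn_pos[of u] by simp_all
  then show ?case
    by (simp add: rld_eq_Nil_iff) (metis last_in_set not_less_zero)
qed (simp add: s_not_Nil)

lemma automaton_snoc_states:
  assumes "u \<in> states p q n" "a \<in> {p, q}"
  shows "automaton p q (Suc n) s (u @ [a]) =
           automaton p q n s u @ [if odd (length (rldn p q u s)) then opp p q a else a]"
proof -
  have u: "length u = n" "set u \<subseteq> {p, q}"
    using assms(1) by (auto simp: states_def)
  show ?thesis
    using automaton_snoc[OF u(1)] opp_end_rld[OF p_neq_q assms(2) rldn_not_Nil[OF u(2)] rldn_pos[OF u(2)]]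
    by simp
qed

lemma automaton_flip_last:
  assumes "x \<in> states p q (Suc n)"
  shows "flip_last p q (automaton p q (Suc n) s x) = automaton p q (Suc n) s (flip_last p q x)"
proof -
  obtain u a where x: "x = u @ [a]" and u: "u \<in> states p q n" and a: "a \<in> {p, q}"
    using assms by (rule states_SucE)
  show ?thesis
    unfolding x flip_last_snoc automaton_snoc_states[OF u a] automaton_snoc_states[OF u opp_mem]
    by (simp add: opp_opp[OF p_neq_q a])
qed

lemma exact_period_automaton:
  "x \<in> states p q n \<Longrightarrow> \<exists>m. exact_period (automaton p q n s) x (2 ^ m)"
proof (induction n arbitrary: x)
  case 0
  then have "x = []"
    by (simp add: states_def)
  moreover have "(automaton p q 0 s ^^ k) [] = []" for k
    by (induction k) (simp_all add: automaton_def)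
  ultimately have "exact_period (automaton p q 0 s) x (2 ^ 0)"
    by (simp add: exact_period_def)
  then show ?case ..
next
  case (Suc n)
  have "butlast x \<in> states p q n"
    using Suc.prems by (auto elim: states_SucE)
  then obtain m where "exact_period (automaton p q n s) (butlast x) (2 ^ m)"
    using Suc.IH by blast
  then have "exact_period (automaton p q (Suc n) s) x (2 ^ m) \<or>
             exact_period (automaton p q (Suc n) s) x (2 ^ Suc m)"
    unfolding power_Suc
  proof (rule exact_period_lift[where S = "states p q (Suc n)" and \<pi> = butlast and \<sigma> = "flip_last p q"])
    fix y assume y: "y \<in> states p q (Suc n)"
    show "automaton p q (Suc n) s y \<in> states p q (Suc n)"
      by (rule automaton_in_states)
    show "butlast (automaton p q (Suc n) s y) = automaton p q n s (butlast y)"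
      using y by (rule butlast_automaton)
    show "flip_last p q (automaton p q (Suc n) s y) = automaton p q (Suc n) s (flip_last p q y)"
      using y by (rule automaton_flip_last)
    show "butlast y = butlast x \<Longrightarrow> y = x \<or> y = flip_last p q x"
      using p_neq_q Suc.prems y by (rule states_Suc_same_butlast)
  qed (use Suc.prems p_neq_q flip_last_flip_last flip_last_neq_self in simp_all)
  then show ?case
    by blast
qed

end

theorem lemma5:
  fixes p q n :: nat and s :: "nat list"
  assumes "0 < p" and "0 < q" and "p \<noteq> q" and "1 \<le> n"
    and "s \<noteq> []" and "set s \<subseteq> {p, q}"
  shows "\<forall>x \<in> states p q n. \<exists>m::nat.
           (automaton p q n s ^^ (2 ^ m)) x = x \<and>
           (\<forall>k. 0 < k \<and> k < 2 ^ m \<longrightarrow> (automaton p q n s ^^ k) x \<noteq> x)"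
proof
  fix x assume "x \<in> states p q n"
  interpret rld_automaton p q s
    using assms by unfold_locales
  obtain m where period: "exact_period (automaton p q n s) x (2 ^ m)"
    using exact_period_automaton[OF \<open>x \<in> states p q n\<close>] ..
  show "\<exists>m::nat. (automaton p q n s ^^ (2 ^ m)) x = x \<and>
               (\<forall>k. 0 < k \<and> k < 2 ^ m \<longrightarrow> (automaton p q n s ^^ k) x \<noteq> x)"
    using exact_period_funpow_self[OF period] exact_period_minimal[OF period] by blast
qed

end
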